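(* Let $Z$ be a finite abelian group, $q$ a prime power, and $\lambda_0,\dots,\lambda_q$ linear characters of $Z$, with $\Lambda:=\sum_{i=0}^q\lambda_i$. (i) If $\Lambda$ vanishes on $Z\setminus\{1\}$, then $|Z|$ divides $q+1$. (ii) If there is $z\in Z$ such that $\Lambda$ vanishes on $Z\setminus\{1,z\}$ and $\Lambda(z)=-(q+1)$, then $|Z|$ divides $2(q+1)$. (iii) Suppose $n\ge3$ is odd, $(n,q)\ne(3,2)$, $\lambda_0^2=1_Z$, and $\Sigma:=-\lambda_0+A\sum_{i=0}^q\lambda_i$ with $A=(q^n+1)/(q+1)$ takes values only in $\{-q^n,0\}\cup\{\pm q^i:0\le i\le n-1\}$ on $Z\setminus\{1\}$. Then either $|Z|$ divides $q+1$, or $Z$ contains an element $z$ with $\lambda_i(z)=-1$ for all $0\le i\le q$; in the latter case, if moreover $\Sigma$ is faithful, then $|Z|$ divides $2(q+1)$. *)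

theory Defs
  imports Complex_Main "HOL-Algebra.Group" "HOL-Computational_Algebra.Primes"
begin

definition linear_char :: "('a, 'b) monoid_scheme \<Rightarrow> ('a \<Rightarrow> complex) \<Rightarrow> bool" where
  "linear_char G \<chi> \<longleftrightarrow>
     (\<forall>x\<in>carrier G. \<chi> x \<noteq> 0) \<and>
     (\<forall>x\<in>carrier G. \<forall>y\<in>carrier G. \<chi> (x \<otimes>\<^bsub>G\<^esub> y) = \<chi> x * \<chi> y)"

definition prime_power_nat :: "nat \<Rightarrow> bool" where
  "prime_power_nat q \<longleftrightarrow> (\<exists>p k. prime p \<and> k \<ge> 1 \<and> q = p ^ k)"

definition faithful_char :: "('a, 'b) monoid_scheme \<Rightarrow> ('a \<Rightarrow> complex) \<Rightarrow> bool" where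
  "faithful_char G \<chi> \<longleftrightarrow> {g \<in> carrier G. \<chi> g = \<chi> \<one>\<^bsub>G\<^esub>} = {\<one>\<^bsub>G\<^esub>}"

end

theory Submission
  imports Defs "Jordan_Normal_Form.Char_Poly"
begin

text \<open>Orthogonality of linear characters gives (i) and (ii): the inner product of \<open>\<Lambda>\<close> with the
  trivial character, resp. with \<open>\<lambda>\<^sub>0\<close>, is \<open>|Z|\<close> times a multiplicity, while the hypotheses
  evaluate it to \<open>q + 1\<close>, resp. \<open>2(q + 1)\<close>.
  For (iii), \<open>A \<Lambda>(z) = \<Sigma>(z) + \<lambda>\<^sub>0(z)\<close> with \<open>A = (q\<^sup>n + 1)/(q + 1)\<close> shows that \<open>\<Lambda>(z)\<close> is
  rational; as a sum of roots of unity it is an algebraic integer, hence an integer, and the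
  arithmetic of \<open>A\<close> leaves only \<open>\<Lambda>(z) \<in> {0, -(q + 1)}\<close>. The value \<open>-(q + 1)\<close> forces
  \<open>\<lambda>\<^sub>i(z) = -1\<close> for all \<open>i\<close>, which happens for at most one \<open>z \<noteq> 1\<close>; so (i) or (ii) applies.\<close>

lemma algebraic_int_eigenvalue_of_int_mat:
  fixes M :: "int mat" and v :: "complex vec"
  assumes M: "M \<in> carrier_mat m m" and v: "v \<in> carrier_vec m" "v \<noteq> 0\<^sub>v m"
    and eigen: "map_mat of_int M *\<^sub>v v = s \<cdot>\<^sub>v v"
  shows "algebraic_int s"
proof -
  have "eigenvalue (map_mat of_int M) s"
    unfolding eigenvalue_def eigenvector_def using M v eigen by auto
  then have "poly (char_poly (map_mat of_int M)) s = 0"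
    using M by (simp add: eigenvalue_root_char_poly)
  then have "poly (map_poly of_int (char_poly M)) s = 0"
    by (simp add: of_int_hom.char_poly_hom[OF M])
  moreover have "lead_coeff (char_poly M) = 1"
    using degree_monic_char_poly[OF M] by simp
  ultimately show ?thesis
    using algebraic_int_altdef_ipoly by blast
qed

text \<open>Multiplication by the sum permutes the \<open>N\<close>-th roots of unity up to integer
  multiplicities, so the sum is an eigenvalue of an integer matrix indexed by these roots.\<close>
lemma algebraic_int_sum_roots_unity:
  fixes x :: "'i \<Rightarrow> complex"
  assumes N: "N > 0" and I: "finite I" and roots: "\<And>i. i \<in> I \<Longrightarrow> x i ^ N = 1"
  shows "algebraic_int (\<Sum>i\<in>I. x i)"
proof -
  define R where "R = {r::complex. r ^ N = 1}"
  have "finite R" unfolding R_def using N by (intro finite_roots_unity) auto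
  then obtain rs where rs: "set rs = R" "distinct rs" using finite_distinct_list by blast
  define m where "m = length rs"
  have rs_bij: "bij_betw (\<lambda>b. rs ! b) {..<m} R"
    unfolding m_def using rs by (metis bij_betw_nth)
  have R_mult: "a \<in> R \<Longrightarrow> b \<in> R \<Longrightarrow> a * b \<in> R" for a b
    unfolding R_def by (simp add: power_mult_distrib)
  define s where "s = (\<Sum>i\<in>I. x i)"
  define M :: "int mat" where "M = mat m m (\<lambda>(a, b). int (card {i\<in>I. x i * rs ! a = rs ! b}))"
  define v :: "complex vec" where "v = vec m (\<lambda>b. rs ! b)"
  have "map_mat of_int M *\<^sub>v v = s \<cdot>\<^sub>v v"
  proof (rule eq_vecI)
    fix a assume "a < dim_vec (s \<cdot>\<^sub>v v)"
    then have a: "a < m" unfolding v_def by simp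
    then have "rs ! a \<in> R" using rs unfolding m_def by auto
    have "(map_mat of_int M *\<^sub>v v) $ a = (\<Sum>b<m. of_nat (card {i\<in>I. x i * rs ! a = rs ! b}) * rs ! b)"
      using a unfolding M_def v_def by (simp add: mult_mat_vec_def scalar_prod_def atLeast0LessThan)
    also have "\<dots> = (\<Sum>r\<in>R. of_nat (card {i\<in>I. x i * rs ! a = r}) * r)"
      using rs_bij by (rule sum.reindex_bij_betw)
    also have "\<dots> = (\<Sum>r\<in>R. \<Sum>i\<in>{i\<in>I. x i * rs ! a = r}. x i * rs ! a)"
      by (intro sum.cong refl) auto
    also have "\<dots> = (\<Sum>i\<in>I. x i * rs ! a)"
      by (rule sum.group) (use I \<open>finite R\<close> \<open>rs ! a \<in> R\<close> roots R_mult R_def in auto)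
    also have "\<dots> = (s \<cdot>\<^sub>v v) $ a"
      using a unfolding s_def v_def by (simp add: sum_distrib_right)
    finally show "(map_mat of_int M *\<^sub>v v) $ a = (s \<cdot>\<^sub>v v) $ a" .
  qed (simp add: v_def M_def)
  moreover have "v \<noteq> 0\<^sub>v m"
  proof -
    have "1 \<in> R" unfolding R_def by simp
    then obtain b where "b < m" "rs ! b = 1" using rs_bij by (metis bij_betw_iff_bijections lessThan_iff)
    then show ?thesis unfolding v_def by (metis index_vec index_zero_vec(1) one_neq_zero)
  qed
  ultimately show ?thesis
    unfolding s_def by (intro algebraic_int_eigenvalue_of_int_mat[of M m v]) (auto simp: M_def v_def)
qed

lemma (in group) bij_betw_mult_left:
  "c \<in> carrier G \<Longrightarrow> bij_betw (\<lambda>x. c \<otimes> x) (carrier G) (carrier G)"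
  by (simp add: bij_betw_def inj_on_cmult surj_const_mult)

lemma linear_char_one:
  assumes "group G" "linear_char G \<chi>"
  shows "\<chi> \<one>\<^bsub>G\<^esub> = 1"
proof -
  have one: "\<one>\<^bsub>G\<^esub> \<in> carrier G" using assms(1) by (rule monoid.one_closed[OF group.is_monoid])
  then have "\<chi> \<one>\<^bsub>G\<^esub> = \<chi> \<one>\<^bsub>G\<^esub> * \<chi> \<one>\<^bsub>G\<^esub>"
    using assms unfolding linear_char_def by (metis group.is_monoid monoid.l_one)
  moreover have "\<chi> \<one>\<^bsub>G\<^esub> \<noteq> 0" using assms(2) one unfolding linear_char_def by simp
  ultimately show ?thesis by (metis mult_cancel_left1)
qed

lemma linear_char_divide:
  "linear_char G \<chi> \<Longrightarrow> linear_char G \<mu> \<Longrightarrow> linear_char G (\<lambda>x. \<chi> x / \<mu> x)"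
  unfolding linear_char_def by auto

lemma linear_char_pow_card:
  assumes G: "group G" "finite (carrier G)" and \<chi>: "linear_char G \<chi>" and x: "x \<in> carrier G"
  shows "\<chi> x ^ card (carrier G) = 1"
proof -
  have "(\<Prod>y\<in>carrier G. \<chi> y) = (\<Prod>y\<in>carrier G. \<chi> (x \<otimes>\<^bsub>G\<^esub> y))"
    by (rule prod.reindex_bij_betw[OF group.bij_betw_mult_left[OF G(1) x], symmetric])
  also have "\<dots> = \<chi> x ^ card (carrier G) * (\<Prod>y\<in>carrier G. \<chi> y)"
    using \<chi> x unfolding linear_char_def by (simp add: prod.distrib)
  finally show ?thesis
    using \<chi> G(2) unfolding linear_char_def by simp
qed

lemma norm_linear_char:
  assumes "group G" "finite (carrier G)" "linear_char G \<chi>" "x \<in> carrier G"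
  shows "norm (\<chi> x) = 1"
proof -
  have "card (carrier G) > 0" using assms(2,4) by (auto simp: card_gt_0_iff)
  moreover have "norm (\<chi> x) ^ card (carrier G) = 1"
    using linear_char_pow_card[OF assms] by (metis norm_one norm_power)
  ultimately show ?thesis using power_eq_imp_eq_base[of "norm (\<chi> x)" _ 1] by simp
qed

lemma char_sum_in_Ints:
  assumes G: "group G" "finite (carrier G)" and I: "finite I"
    and \<chi>: "\<And>i. i \<in> I \<Longrightarrow> linear_char G (\<chi> i)" and z: "z \<in> carrier G"
    and rational: "(\<Sum>i\<in>I. \<chi> i z) \<in> \<rat>"
  shows "(\<Sum>i\<in>I. \<chi> i z) \<in> \<int>"
proof -
  have "card (carrier G) > 0" using G(2) z by (auto simp: card_gt_0_iff)
  then have "algebraic_int (\<Sum>i\<in>I. \<chi> i z)"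
    using I by (rule algebraic_int_sum_roots_unity) (use linear_char_pow_card[OF G \<chi> z] in auto)
  then show ?thesis using rational by (rule rational_algebraic_int_is_int)
qed

lemma sum_linear_char:
  assumes G: "group G" "finite (carrier G)" and \<chi>: "linear_char G \<chi>"
  shows "(\<Sum>y\<in>carrier G. \<chi> y) = (if \<forall>y\<in>carrier G. \<chi> y = 1 then of_nat (card (carrier G)) else 0)"
proof (cases "\<forall>y\<in>carrier G. \<chi> y = 1")
  case False
  then obtain x where x: "x \<in> carrier G" "\<chi> x \<noteq> 1" by blast
  have "(\<Sum>y\<in>carrier G. \<chi> y) = (\<Sum>y\<in>carrier G. \<chi> (x \<otimes>\<^bsub>G\<^esub> y))"
    by (rule sum.reindex_bij_betw[OF group.bij_betw_mult_left[OF G(1) x(1)], symmetric])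
  also have "\<dots> = \<chi> x * (\<Sum>y\<in>carrier G. \<chi> y)"
    using \<chi> x unfolding linear_char_def by (simp add: sum_distrib_left)
  finally have "(1 - \<chi> x) * (\<Sum>y\<in>carrier G. \<chi> y) = 0" by (simp add: algebra_simps)
  then have "(\<Sum>y\<in>carrier G. \<chi> y) = 0" using x(2) by simp
  then show ?thesis unfolding if_not_P[OF False] .
qed simp

lemma char_sum_inner_product:
  assumes G: "group G" "finite (carrier G)" and I: "finite I"
    and \<chi>: "\<And>i. i \<in> I \<Longrightarrow> linear_char G (\<chi> i)" and \<mu>: "linear_char G \<mu>"
  shows "(\<Sum>y\<in>carrier G. (\<Sum>i\<in>I. \<chi> i y) / \<mu> y)
    = of_nat (card (carrier G) * card {i\<in>I. \<forall>y\<in>carrier G. \<chi> i y = \<mu> y})"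
proof -
  have "(\<Sum>y\<in>carrier G. (\<Sum>i\<in>I. \<chi> i y) / \<mu> y) = (\<Sum>i\<in>I. \<Sum>y\<in>carrier G. \<chi> i y / \<mu> y)"
    by (simp add: sum_divide_distrib sum.swap[of _ "carrier G"])
  also have "\<dots> = (\<Sum>i\<in>I. if \<forall>y\<in>carrier G. \<chi> i y = \<mu> y then of_nat (card (carrier G)) else 0)"
  proof (intro sum.cong refl)
    fix i assume "i \<in> I"
    then have "linear_char G (\<lambda>y. \<chi> i y / \<mu> y)" using \<chi> \<mu> by (simp add: linear_char_divide)
    moreover have "y \<in> carrier G \<Longrightarrow> \<mu> y \<noteq> 0" for y using \<mu> unfolding linear_char_def by simp
    ultimately show "(\<Sum>y\<in>carrier G. \<chi> i y / \<mu> y) =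
        (if \<forall>y\<in>carrier G. \<chi> i y = \<mu> y then of_nat (card (carrier G)) else 0)"
      by (simp add: sum_linear_char[OF G] cong: ball_cong)
  qed
  also have "\<dots> = (\<Sum>i\<in>{i\<in>I. \<forall>y\<in>carrier G. \<chi> i y = \<mu> y}. of_nat (card (carrier G)))"
    by (rule sum.inter_filter[OF I, symmetric])
  also have "\<dots> = of_nat (card (carrier G) * card {i\<in>I. \<forall>y\<in>carrier G. \<chi> i y = \<mu> y})"
    by simp
  finally show ?thesis .
qed

lemma card_dvd_of_char_sum_inner_product:
  assumes "group G" "finite (carrier G)" "finite I"
    and "\<And>i. i \<in> I \<Longrightarrow> linear_char G (\<chi> i)" "linear_char G \<mu>"
    and "(\<Sum>y\<in>carrier G. (\<Sum>i\<in>I. \<chi> i y) / \<mu> y) = of_nat k"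
  shows "card (carrier G) dvd k"
proof -
  have "k = card (carrier G) * card {i\<in>I. \<forall>y\<in>carrier G. \<chi> i y = \<mu> y}"
    using char_sum_inner_product[OF assms(1-5)] assms(6) by (simp only: of_nat_eq_iff)
  then show ?thesis by simp
qed

lemma sum_eq_neg_card_imp_eq_neg_one:
  fixes x :: "'i \<Rightarrow> complex"
  assumes I: "finite I" and norm: "\<And>i. i \<in> I \<Longrightarrow> norm (x i) \<le> 1"
    and sum: "(\<Sum>i\<in>I. x i) = - of_nat (card I)" and i: "i \<in> I"
  shows "x i = -1"
proof -
  have Re_ge: "Re (x j) + 1 \<ge> 0" if "j \<in> I" for j
    using abs_Re_le_cmod[of "x j"] norm[OF that] by linarith
  have "(\<Sum>j\<in>I. Re (x j) + 1) = Re (\<Sum>j\<in>I. x j) + card I"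
    by (simp add: sum.distrib)
  then have "(\<Sum>j\<in>I. Re (x j) + 1) = 0" using sum by simp
  then have "\<forall>j\<in>I. Re (x j) + 1 = 0" by (simp only: sum_nonneg_eq_0_iff[OF I Re_ge])
  then have Re: "Re (x i) = -1" using i by (simp add: add_eq_0_iff2)
  have "Re (x i)^2 + Im (x i)^2 = norm (x i)^2" by (simp add: cmod_power2)
  also have "\<dots> \<le> 1" using norm[OF i] by (simp add: power_le_one)
  finally have "Re (x i)^2 + Im (x i)^2 \<le> 1" .
  then have "Im (x i) = 0" using Re by simp
  then show ?thesis using Re by (simp add: complex_eq_iff)
qed

definition signed_power_values :: "'a::ring_1 \<Rightarrow> nat \<Rightarrow> 'a set" where
  "signed_power_values Q n = {- (Q ^ n), 0} \<union> (\<lambda>i. Q ^ i) ` {..n - 1} \<union> (\<lambda>i. - (Q ^ i)) ` {..n - 1}"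

lemma signed_power_values_of_int:
  "signed_power_values (of_int Q :: 'a::ring_1) n = of_int ` signed_power_values Q n"
  unfolding signed_power_values_def by (simp add: image_Un image_image)

lemma signed_power_values_altdef:
  "signed_power_values Q n = {- (Q ^ n), 0} \<union> {Q ^ i | i. i \<le> n - 1} \<union> {- (Q ^ i) | i. i \<le> n - 1}"
  unfolding signed_power_values_def by auto

lemma odd_power_plus_one_dvd:
  fixes x :: "'a::comm_ring_1"
  assumes "odd n"
  shows "x + 1 dvd x ^ n + 1"
proof -
  have "x ^ n + 1 = (x + 1) * (\<Sum>i<n. (-1) ^ (n - Suc i) * x ^ i)"
    using power_diff_sumr2[of x n "-1"] assms by simp
  then show ?thesis by (rule dvdI)
qed

context
  fixes Q A :: int and n :: nat
  assumes Q: "Q \<ge> 2" and n: "n \<ge> 3" and A: "A * (Q + 1) = Q ^ n + 1"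
begin

lemma odd_power_quotient_ge_3: "A \<ge> 3"
proof -
  have "(Q * Q - Q + 1) * (Q + 1) = Q ^ 3 + 1" by (simp add: algebra_simps power3_eq_cube)
  also have "\<dots> \<le> A * (Q + 1)" using A power_increasing[OF n, of Q] Q by simp
  finally have "Q * Q - Q + 1 \<le> A" using Q by simp
  moreover have "Q * Q \<ge> 2 * Q" using Q by (intro mult_right_mono) auto
  ultimately show ?thesis using Q by linarith
qed

lemma power_pred_less_twice_odd_power_quotient: "Q ^ (n - 1) + 1 < 2 * A"
proof -
  define P where "P = Q ^ (n - 1)"
  have QP: "Q ^ n = Q * P" unfolding P_def using n by (cases n) auto
  have "P \<ge> Q" unfolding P_def using power_increasing[of 1 "n - 1" Q] Q n by simp
  then have "(P - 1) * (Q - 1) > 0" using Q by simp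
  then have "(P + 1) * (Q + 1) < (2 * A) * (Q + 1)" using A QP by (simp add: algebra_simps)
  then have "P + 1 < 2 * A" by (rule mult_right_less_imp_less) (use Q in simp)
  then show ?thesis unfolding P_def .
qed

lemma odd_power_quotient_ne_power_plus_1:
  assumes exception: "(n, Q) \<noteq> (3, 2)"
  shows "A \<noteq> Q ^ i + 1"
proof
  assume A_eq: "A = Q ^ i + 1"
  have "i \<noteq> 0"
  proof
    assume "i = 0"
    then show False using A_eq odd_power_quotient_ge_3 by simp
  qed
  then obtain j where i: "i = Suc j" by (cases i) auto
  obtain m where m: "n = Suc m" using n by (cases n) auto
  have "Q * (Q * Q ^ j + Q ^ j + 1) = Q * Q ^ m"
    using A A_eq i m by (simp add: algebra_simps)
  then have eq: "Q * Q ^ j + Q ^ j + 1 = Q ^ m" using Q by simp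
  show False
  proof (cases j)
    case 0
    then have eq: "Q + 2 = Q ^ m" using eq by simp
    show False
    proof (cases "m = 2")
      case True
      then have "(Q - 2) * (Q + 1) = 0" using eq by (simp add: power2_eq_square algebra_simps)
      then show False using Q exception m True by simp
    next
      case False
      then have "Q ^ 3 \<le> Q ^ m" using m n Q by (intro power_increasing) auto
      moreover have "Q ^ 3 \<ge> 4 * Q"
        using mult_mono[of 4 "Q * Q" Q Q] mult_mono[of 2 Q 2 Q] Q by (simp add: power3_eq_cube)
      ultimately show False using eq Q by linarith
    qed
  next
    case (Suc l)
    then have "Q dvd Q * Q ^ j + Q ^ j" "Q dvd Q ^ m" using m n by (auto intro: dvd_power)
    then have "Q dvd 1" using eq by (metis dvd_add_right_iff)
    then show False using Q by simp
  qed
qed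

lemma odd_power_quotient_ne_power_minus_1:
  assumes exception: "(n, Q) \<noteq> (3, 2)"
  shows "A \<noteq> Q ^ i - 1"
proof
  assume A_eq: "A = Q ^ i - 1"
  have "i \<noteq> 0"
  proof
    assume "i = 0"
    then show False using A_eq odd_power_quotient_ge_3 by simp
  qed
  have eq: "Q * Q ^ i + Q ^ i = Q ^ n + Q + 2" using A A_eq by (simp add: algebra_simps)
  have "Q dvd Q * Q ^ i + Q ^ i" "Q dvd Q ^ n + Q"
    using \<open>i \<noteq> 0\<close> n by (auto intro: dvd_power)
  then have "Q dvd 2" using eq by (metis dvd_add_right_iff)
  then have Q2: "Q = 2" using Q zdvd_imp_le[of Q 2] by simp
  then have eq: "3 * 2 ^ i = (2::int) ^ n + 4" using eq by simp
  consider "i = 1" | "i = 2" | "i \<ge> 3" using \<open>i \<noteq> 0\<close> by linarith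
  then show False
  proof cases
    case 1
    then show False using eq power_increasing[OF n, of "2::int"] by simp
  next
    case 2
    then have "(2::int) ^ n = 2 ^ 3" using eq by simp
    then show False using exception Q2 power_inject_exp[of "2::int" n 3] by simp
  next
    case 3
    obtain a b where "i = a + 3" "n = b + 3" using 3 n by (metis le_add_diff_inverse2)
    then have "8 * (3 * 2 ^ a - 2 ^ b) = (4::int)" using eq by (simp add: power_add algebra_simps)
    then show False by presburger
  qed
qed

text \<open>Dividing \<open>s + e\<close> by \<open>A\<close> leaves no room: \<open>|s + e| < 2A\<close> unless \<open>s = -Q\<^sup>n\<close>.\<close>
lemma odd_power_quotient_multiple_cases:
  fixes s e k :: int
  assumes exception: "(n, Q) \<noteq> (3, 2)" and s: "s \<in> signed_power_values Q n"
    and e: "e = 1 \<or> e = -1" and k: "A * k = s + e"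
  shows "k = 0 \<or> k = - (Q + 1)"
proof -
  have A3: "A \<ge> 3" by (rule odd_power_quotient_ge_3)
  consider "s = - (Q ^ n)" | "s = 0" | i where "i \<le> n - 1" "s = Q ^ i \<or> s = - (Q ^ i)"
    using s unfolding signed_power_values_def by blast
  then show ?thesis
  proof cases
    case 1
    then have sum: "A * (k + (Q + 1)) = e + 1" using k A by (simp add: algebra_simps)
    have "e \<noteq> 1"
    proof
      assume "e = 1"
      then have "A dvd 2" using sum dvdI[of 2 A] by simp
      then show False using A3 zdvd_imp_le[of A 2] by simp
    qed
    then show ?thesis using sum e A3 by simp
  next
    case 2
    then have "A * (k * e) = 1" using k e by auto
    then have "A dvd 1" by (metis dvdI)
    then show ?thesis using A3 by simp
  next
    case (3 i)
    have "Q ^ i \<le> Q ^ (n - 1)" using 3 Q by (intro power_increasing) auto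
    moreover have pos: "Q ^ i \<ge> 1" using Q by simp
    ultimately have "\<bar>A * k\<bar> < A * 2"
      using k e 3 power_pred_less_twice_odd_power_quotient by auto
    then have "\<bar>k\<bar> < 2" using A3 by (simp add: abs_mult)
    moreover have "k \<noteq> 1 \<and> k \<noteq> -1"
      using odd_power_quotient_ne_power_plus_1[OF exception, of i]
        odd_power_quotient_ne_power_minus_1[OF exception, of i] k e 3 A3 pos by auto
    ultimately show ?thesis by auto
  qed
qed

end

lemma prime_power_nat_ge_2: "prime_power_nat q \<Longrightarrow> q \<ge> 2"
  unfolding prime_power_nat_def
proof (elim exE conjE)
  fix p k assume p: "prime p" and k: "k \<ge> 1" "q = p ^ k"
  have "2 \<le> p" using p by (rule prime_ge_2_nat)
  then have "p ^ 1 \<le> p ^ k" using k by (intro power_increasing) auto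
  then show "q \<ge> 2" using \<open>2 \<le> p\<close> k by simp
qed

lemma char_sum_eq_neg_card_imp_eq_neg_one:
  assumes G: "group G" "finite (carrier G)" and I: "finite I"
    and \<chi>: "\<And>i. i \<in> I \<Longrightarrow> linear_char G (\<chi> i)" and z: "z \<in> carrier G"
    and at_z: "(\<Sum>i\<in>I. \<chi> i z) = - of_nat (card I)" and i: "i \<in> I"
  shows "\<chi> i z = -1"
  using sum_eq_neg_card_imp_eq_neg_one[OF I _ at_z i] norm_linear_char[OF G \<chi> z] by simp

lemma card_dvd_of_char_sum_vanishing:
  assumes G: "group G" "finite (carrier G)" and I: "finite I"
    and \<chi>: "\<And>i. i \<in> I \<Longrightarrow> linear_char G (\<chi> i)"
    and vanish: "\<forall>w\<in>carrier G - {\<one>\<^bsub>G\<^esub>}. (\<Sum>i\<in>I. \<chi> i w) = 0"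
  shows "card (carrier G) dvd card I"
proof (rule card_dvd_of_char_sum_inner_product[OF G I \<chi>])
  show "linear_char G (\<lambda>_. 1)" by (simp add: linear_char_def)
  have one: "\<one>\<^bsub>G\<^esub> \<in> carrier G" using G(1) by (rule monoid.one_closed[OF group.is_monoid])
  have "(\<Sum>y\<in>carrier G. (\<Sum>i\<in>I. \<chi> i y) / 1) = (\<Sum>i\<in>I. \<chi> i \<one>\<^bsub>G\<^esub>)"
    using vanish by (simp add: sum.remove[OF G(2) one])
  also have "\<dots> = of_nat (card I)" using linear_char_one[OF G(1) \<chi>] by simp
  finally show "(\<Sum>y\<in>carrier G. (\<Sum>i\<in>I. \<chi> i y) / 1) = of_nat (card I)" .
qed

lemma card_dvd_twice_of_char_sum_vanishing_off:
  assumes G: "group G" "finite (carrier G)" and I: "finite I" "j \<in> I"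
    and \<chi>: "\<And>i. i \<in> I \<Longrightarrow> linear_char G (\<chi> i)" and z: "z \<in> carrier G"
    and vanish: "\<forall>w\<in>carrier G - {\<one>\<^bsub>G\<^esub>, z}. (\<Sum>i\<in>I. \<chi> i w) = 0"
    and at_z: "(\<Sum>i\<in>I. \<chi> i z) = - of_nat (card I)"
  shows "card (carrier G) dvd 2 * card I"
proof (rule card_dvd_of_char_sum_inner_product[OF G I(1) \<chi> \<chi>[OF I(2)]])
  have one: "\<one>\<^bsub>G\<^esub> \<in> carrier G" using G(1) by (rule monoid.one_closed[OF group.is_monoid])
  have at_one: "(\<Sum>i\<in>I. \<chi> i \<one>\<^bsub>G\<^esub>) = of_nat (card I)" "\<chi> j \<one>\<^bsub>G\<^esub> = 1"
    using linear_char_one[OF G(1) \<chi>] I by auto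
  have "\<chi> j z = -1" by (rule char_sum_eq_neg_card_imp_eq_neg_one[OF G I(1) \<chi> z at_z I(2)])
  then have "z \<noteq> \<one>\<^bsub>G\<^esub>" using at_one by auto
  have "(\<Sum>y\<in>carrier G. (\<Sum>i\<in>I. \<chi> i y) / \<chi> j y) = (\<Sum>y\<in>{\<one>\<^bsub>G\<^esub>, z}. (\<Sum>i\<in>I. \<chi> i y) / \<chi> j y)"
    by (rule sum.mono_neutral_right) (use G(2) one z vanish in auto)
  also have "\<dots> = of_nat (2 * card I)"
    using \<open>z \<noteq> \<one>\<^bsub>G\<^esub>\<close> at_one at_z \<open>\<chi> j z = -1\<close> by simp
  finally show "(\<Sum>y\<in>carrier G. (\<Sum>i\<in>I. \<chi> i y) / \<chi> j y) = of_nat (2 * card I)" .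
qed

text \<open>Were \<open>z w \<noteq> 1\<close>, every \<open>\<chi>\<^sub>i (z w) = 1\<close> would give the character sum a third value \<open>|I|\<close>;
  hence \<open>z w = 1 = z z\<close>.\<close>
lemma eq_of_chars_neg_one_at_both:
  assumes G: "group G" and I: "finite I" "I \<noteq> {}"
    and \<chi>: "\<And>i. i \<in> I \<Longrightarrow> linear_char G (\<chi> i)"
    and two_valued: "\<forall>w\<in>carrier G - {\<one>\<^bsub>G\<^esub>}.
      (\<Sum>i\<in>I. \<chi> i w) = 0 \<or> (\<Sum>i\<in>I. \<chi> i w) = - of_nat (card I)"
    and z: "z \<in> carrier G" "\<forall>i\<in>I. \<chi> i z = -1"
    and w: "w \<in> carrier G" "\<forall>i\<in>I. \<chi> i w = -1"
  shows "w = z"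
proof -
  have "card I > 0" using I by (simp add: card_gt_0_iff)
  then have card_I: "of_nat (card I) \<noteq> (0::complex)" "of_nat (card I) \<noteq> (- of_nat (card I) :: complex)"
    by (simp_all add: complex_eq_iff)
  have mult_one: "z \<otimes>\<^bsub>G\<^esub> y = \<one>\<^bsub>G\<^esub>" if y: "y \<in> carrier G" "\<forall>i\<in>I. \<chi> i y = -1" for y
  proof (rule ccontr)
    assume ne: "z \<otimes>\<^bsub>G\<^esub> y \<noteq> \<one>\<^bsub>G\<^esub>"
    have "z \<otimes>\<^bsub>G\<^esub> y \<in> carrier G" using z y monoid.m_closed[OF group.is_monoid[OF G]] by blast
    then have "(\<Sum>i\<in>I. \<chi> i (z \<otimes>\<^bsub>G\<^esub> y)) = 0 \<or> (\<Sum>i\<in>I. \<chi> i (z \<otimes>\<^bsub>G\<^esub> y)) = - of_nat (card I)"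
      using two_valued ne by blast
    moreover have "(\<Sum>i\<in>I. \<chi> i (z \<otimes>\<^bsub>G\<^esub> y)) = of_nat (card I)"
      using z y \<chi> unfolding linear_char_def by simp
    ultimately show False using card_I by metis
  qed
  have "z \<otimes>\<^bsub>G\<^esub> w = z \<otimes>\<^bsub>G\<^esub> z" using mult_one z w by simp
  then show ?thesis
    using z w monoid.Units_l_cancel[OF group.is_monoid[OF G]] group.Units_eq[OF G] by auto
qed

lemma card_dvd_of_char_sum_two_valued:
  assumes G: "group G" "finite (carrier G)" and I: "finite I" "I \<noteq> {}"
    and \<chi>: "\<And>i. i \<in> I \<Longrightarrow> linear_char G (\<chi> i)"
    and two_valued: "\<forall>w\<in>carrier G - {\<one>\<^bsub>G\<^esub>}.
      (\<Sum>i\<in>I. \<chi> i w) = 0 \<or> (\<Sum>i\<in>I. \<chi> i w) = - of_nat (card I)"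
  shows "card (carrier G) dvd card I
    \<or> (\<exists>z\<in>carrier G. (\<forall>i\<in>I. \<chi> i z = -1) \<and> card (carrier G) dvd 2 * card I)"
proof (cases "\<forall>w\<in>carrier G - {\<one>\<^bsub>G\<^esub>}. (\<Sum>i\<in>I. \<chi> i w) = 0")
  case True
  then show ?thesis using card_dvd_of_char_sum_vanishing[of G I \<chi>] G I \<chi> by blast
next
  case False
  then obtain z where z: "z \<in> carrier G - {\<one>\<^bsub>G\<^esub>}" "(\<Sum>i\<in>I. \<chi> i z) = - of_nat (card I)"
    using two_valued by blast
  have neg_one: "\<forall>i\<in>I. \<chi> i w = -1" if "w \<in> carrier G" "(\<Sum>i\<in>I. \<chi> i w) = - of_nat (card I)" for w
    using char_sum_eq_neg_card_imp_eq_neg_one[OF G I(1) \<chi> that] by blast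
  have "\<forall>w\<in>carrier G - {\<one>\<^bsub>G\<^esub>, z}. (\<Sum>i\<in>I. \<chi> i w) = 0"
  proof
    fix w assume w: "w \<in> carrier G - {\<one>\<^bsub>G\<^esub>, z}"
    show "(\<Sum>i\<in>I. \<chi> i w) = 0"
    proof (rule ccontr)
      assume "(\<Sum>i\<in>I. \<chi> i w) \<noteq> 0"
      then have "(\<Sum>i\<in>I. \<chi> i w) = - of_nat (card I)" using two_valued w by blast
      then have "w = z" using eq_of_chars_neg_one_at_both[OF G(1) I \<chi> two_valued] neg_one w z by blast
      then show False using w by blast
    qed
  qed
  then have "card (carrier G) dvd 2 * card I"
    using card_dvd_twice_of_char_sum_vanishing_off[of G I _ \<chi> z] G I \<chi> z by blast
  then show ?thesis using z neg_one by blast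
qed

lemma char_sum_eq_0_or_neg_succ:
  fixes q n :: nat
  assumes G: "group G" "finite (carrier G)" and \<chi>: "\<And>i. i \<le> q \<Longrightarrow> linear_char G (\<chi> i)"
    and q: "q \<ge> 2" and n: "n \<ge> 3" "odd n" "(n, q) \<noteq> (3, 2)"
    and z: "z \<in> carrier G" and \<chi>0: "\<chi> 0 z ^ 2 = 1"
    and in_values: "- \<chi> 0 z + ((of_nat q ^ n + 1) / (of_nat q + 1)) * (\<Sum>i\<le>q. \<chi> i z)
      \<in> signed_power_values (of_nat q) n"
  shows "(\<Sum>i\<le>q. \<chi> i z) = 0 \<or> (\<Sum>i\<le>q. \<chi> i z) = - of_nat (q + 1)"
proof -
  define Q :: int where "Q = int q"
  define A :: int where "A = (Q ^ n + 1) div (Q + 1)"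
  have Q2: "Q \<ge> 2" using q unfolding Q_def by simp
  have exception: "(n, Q) \<noteq> (3, 2)" using n(3) unfolding Q_def by auto
  have AQ: "A * (Q + 1) = Q ^ n + 1" unfolding A_def using odd_power_plus_one_dvd[OF n(2), of Q] by simp
  have A3: "A \<ge> 3" using odd_power_quotient_ge_3[OF Q2 n(1) AQ] .
  have "(of_int A :: complex) * (of_nat q + 1) = of_nat q ^ n + 1"
    using arg_cong[OF AQ, of "of_int :: int \<Rightarrow> complex"] unfolding Q_def by simp
  moreover have "(of_nat q + 1 :: complex) \<noteq> 0" by (simp add: complex_eq_iff)
  ultimately have coeff: "(of_nat q ^ n + 1) / (of_nat q + 1) = (of_int A :: complex)"
    by (metis nonzero_mult_div_cancel_right)
  obtain e :: int where e: "e = 1 \<or> e = -1" "\<chi> 0 z = of_int e"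
  proof -
    have "\<chi> 0 z = 1 \<or> \<chi> 0 z = -1" using \<chi>0 by (simp add: power2_eq_1_iff)
    then show ?thesis using that[of 1] that[of "-1"] by auto
  qed
  obtain s where s: "s \<in> signed_power_values Q n" "- \<chi> 0 z + of_int A * (\<Sum>i\<le>q. \<chi> i z) = of_int s"
  proof -
    have of_nat_q: "of_nat q = (of_int Q :: complex)" unfolding Q_def by simp
    have "- \<chi> 0 z + of_int A * (\<Sum>i\<le>q. \<chi> i z) \<in> of_int ` signed_power_values Q n"
      using in_values[unfolded coeff] unfolding of_nat_q signed_power_values_of_int .
    then show ?thesis using that by blast
  qed
  have A_nz: "(of_int A :: complex) \<noteq> 0" using A3 by simp
  have sum_eq: "(\<Sum>i\<le>q. \<chi> i z) = of_int (s + e) / of_int A"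
    using s(2) e(2) A_nz by (simp add: field_simps)
  have "(\<Sum>i\<le>q. \<chi> i z) \<in> \<rat>" unfolding sum_eq by (intro Rats_divide Rats_of_int)
  then have "(\<Sum>i\<le>q. \<chi> i z) \<in> \<int>" using char_sum_in_Ints[of G "{..q}" \<chi> z] G \<chi> z by simp
  then obtain k where k: "(\<Sum>i\<le>q. \<chi> i z) = of_int k" by (auto elim: Ints_cases)
  then have "of_int (A * k) = (of_int (s + e) :: complex)" using sum_eq A_nz by (simp add: field_simps)
  then have "A * k = s + e" by (simp only: of_int_eq_iff)
  then have "k = 0 \<or> k = - (Q + 1)"
    using odd_power_quotient_multiple_cases[OF Q2 n(1) AQ exception s(1) e(1)] by simp
  then show ?thesis using k unfolding Q_def by auto
qed

theorem mainTheorem9: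
  fixes Z :: "('a, 'b) monoid_scheme"
    and q :: nat
    and chi :: "nat \<Rightarrow> 'a \<Rightarrow> complex"
  assumes "comm_group Z"
    and "finite (carrier Z)"
    and "prime_power_nat q"
    and "\<And>i. i \<le> q \<Longrightarrow> linear_char Z (chi i)"
  defines "Lam \<equiv> (\<lambda>z. \<Sum>i\<le>q. chi i z)"
  shows
    "((\<forall>z\<in>carrier Z - {\<one>\<^bsub>Z\<^esub>}. Lam z = 0) \<longrightarrow> card (carrier Z) dvd q + 1)
     \<and>
     ((\<exists>z\<in>carrier Z. (\<forall>w\<in>carrier Z - {\<one>\<^bsub>Z\<^esub>, z}. Lam w = 0) \<and> Lam z = - of_nat (q + 1))
        \<longrightarrow> card (carrier Z) dvd 2 * (q + 1))
     \<and>
     (\<forall>n::nat. \<forall>Sig :: 'a \<Rightarrow> complex.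
        n \<ge> 3 \<and> odd n \<and> (n, q) \<noteq> (3, 2)
        \<and> (\<forall>z\<in>carrier Z. (chi 0 z)^2 = 1)
        \<and> Sig = (\<lambda>z. - chi 0 z + ((of_nat q ^ n + 1) / (of_nat q + 1)) * Lam z)
        \<and> (\<forall>z\<in>carrier Z - {\<one>\<^bsub>Z\<^esub>}.
              Sig z \<in> {- (of_nat q ^ n), 0}
                   \<union> {of_nat q ^ i | i. i \<le> n - 1}
                   \<union> {- (of_nat q ^ i) | i. i \<le> n - 1})
        \<longrightarrow> card (carrier Z) dvd q + 1
            \<or> (\<exists>z\<in>carrier Z. (\<forall>i\<le>q. chi i z = -1)
                  \<and> (faithful_char Z Sig \<longrightarrow> card (carrier Z) dvd 2 * (q + 1))))"
proof -
  have G: "group Z" "finite (carrier Z)" using assms(1,2) comm_group.axioms(2) by auto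
  note \<chi> = assms(4)[unfolded atMost_iff[symmetric]]
  have I: "finite {..q}" "0 \<in> {..q}" "card {..q} = q + 1" by simp_all
  show ?thesis
  proof (intro conjI impI allI, goal_cases vanishing vanishing_off two_valued)
    case vanishing
    then show ?case
      using card_dvd_of_char_sum_vanishing[of Z "{..q}" chi] G I \<chi> unfolding Lam_def by simp
  next
    case vanishing_off
    then show ?case
      using card_dvd_twice_of_char_sum_vanishing_off[of Z "{..q}" 0 chi] G I \<chi> unfolding Lam_def by auto
  next
    case (two_valued n Sig)
    then have n: "n \<ge> 3" "odd n" "(n, q) \<noteq> (3, 2)" and \<chi>0: "\<forall>z\<in>carrier Z. (chi 0 z)^2 = 1"
      and Sig: "Sig = (\<lambda>z. - chi 0 z + ((of_nat q ^ n + 1) / (of_nat q + 1)) * Lam z)"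
      and Sig_values: "\<forall>z\<in>carrier Z - {\<one>\<^bsub>Z\<^esub>}. Sig z \<in> signed_power_values (of_nat q) n"
      unfolding signed_power_values_altdef by blast+
    have "Lam w = 0 \<or> Lam w = - of_nat (card {..q})" if "w \<in> carrier Z - {\<one>\<^bsub>Z\<^esub>}" for w
      using char_sum_eq_0_or_neg_succ[OF G assms(4) prime_power_nat_ge_2[OF assms(3)] n, where z = w]
        \<chi>0 Sig_values that I(3) unfolding Sig Lam_def by simp
    then show ?case
      using card_dvd_of_char_sum_two_valued[of Z "{..q}" chi] G I \<chi> unfolding Lam_def by auto
  qed
qed
end
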